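(* Let $d\ge1$, $r\in(0,+\infty)$, let $\|\cdot\|$ be a norm on $\mathbb{R}^d$. Assume $P=h\cdot\lambda_d$ with $h\in L^{\frac{d}{d+r}}(\lambda_d)$ and $\int\|x\|^r\,dP(x)<+\infty$. Let $(a_n)_{n\ge1}$ be an $L^r$-optimal greedy quantization sequence for $P$, $a^{(n)}=\{a_1,\dots,a_n\}$, so that $a_1$ is an $L^r$-median of $P$. Assume $\operatorname{supp}(P)\subset A$ and $a_1\in A$ for some set $A$ which is star-shaped with respect to $a_1$ and peakless with respect to $a_1$ in the sense that $$\mathfrak{p}(A,\|\cdot-a_1\|):=\inf\Big\{\frac{\lambda_d(B(x,t)\cap A)}{\lambda_d(B(x,t))}:\ x\in A,\ 0<t\le\|x-a_1\|\Big\}>0.$$ Assume $h$ is almost radial non-increasing on $A$ with respect to $a_1$, with associated norm $\|\cdot\|_0$ and constant $M\in(0,1]$, and let $C_0\in[1,+\infty)$ be such that $\frac1{C_0}\|x\|_0\le\|x\|\le C_0\|x\|_0$ for all $x\in\mathbb{R}^d$. Then $$\forall n\ge2,\quad e_r(a^{(n)},P)\le\kappa^{\mathrm{G,Z,P}}_{d,r,M,C_0,\mathfrak{p}(A,\|\cdot-a_1\|)}\ \|h\|^{\frac1r}_{L^{\frac{d}{d+r}}(\lambda_d)}(n-1)^{-\frac1d},$$ where $$\kappa^{\mathrm{G,Z,P}}_{d,r,M,C_0,\mathfrak{p}(A,\|\cdot-a_1\|)}\le\frac{2C_0^2\,r^{\frac1d}}{d^{\frac1d}M^{d+r}V_d^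{\frac1d}\mathfrak{p}(A,\|\cdot-a_1\|)^{\frac1d}}\min_{\varepsilon\in(0,\frac13)}\varphi_r(\varepsilon)^{-\frac1d}.$$
   Context: For a finite nonempty $\Gamma\subset\mathbb{R}^d$, $d(x,\Gamma)=\min_{a\in\Gamma}\|x-a\|$ and $e_r(\Gamma,P)=\big(\int d(x,\Gamma)^r dP(x)\big)^{1/r}$. An $L^r$-optimal greedy quantization sequence for $P$ is a sequence $(a_n)_{n\ge1}$ with $a_{n+1}\in\operatorname{argmin}_{\xi}e_r(a^{(n)}\cup\{\xi\},P)$ for all $n\ge0$, $a^{(0)}=\varnothing$, $a^{(n)}=\{a_1,\dots,a_n\}$. $B(x,t)=\{y:\|y-x\|\le t\}$, $\lambda_d$ Lebesgue measure, $V_d=\lambda_d(B(0,1))$, $\varphi_r(u)=(3^{-r}-u^r)u^d$, $\|h\|_{L^{p}(\lambda_d)}=(\int h^p d\lambda_d)^{1/p}$. A function $f:\mathbb{R}^d\to\mathbb{R}_+$ is almost radial non-increasing on $A$ with respect to $a\in A$ if there exist a norm $\|\cdot\|_0$ on $\mathbb{R}^d$ and a constant $M\in(0,1]$ such that for all $x,y\in A\setminus\{a\}$ with $\|y-a\|_0\le\|x-a\|_0$, one has $f(y)\ge Mf(x)$. *)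

theory Defs
  imports "HOL-Probability.Probability"
begin

definition is_norm :: "('a::real_vector \<Rightarrow> real) \<Rightarrow> bool" where
  "is_norm N \<longleftrightarrow> (\<forall>x. 0 \<le> N x) \<and> (\<forall>x. N x = 0 \<longleftrightarrow> x = 0)
     \<and> (\<forall>c x. N (scaleR c x) = \<bar>c\<bar> * N x) \<and> (\<forall>x y. N (x + y) \<le> N x + N y)"

definition nball :: "('a::real_vector \<Rightarrow> real) \<Rightarrow> 'a \<Rightarrow> real \<Rightarrow> 'a set" where
  "nball N x t = {y. N (y - x) \<le> t}"

definition dist_set :: "('a::real_vector \<Rightarrow> real) \<Rightarrow> 'a \<Rightarrow> 'a set \<Rightarrow> real" where
  "dist_set N x \<Gamma> = Min ((\<lambda>a. N (x - a)) ` \<Gamma>)"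

definition quant_err :: "('a::real_vector \<Rightarrow> real) \<Rightarrow> real \<Rightarrow> 'a measure \<Rightarrow> 'a set \<Rightarrow> real" where
  "quant_err N r P \<Gamma> = (\<integral>x. dist_set N x \<Gamma> powr r \<partial>P) powr (1 / r)"

definition greedy_seq :: "('a::real_vector \<Rightarrow> real) \<Rightarrow> real \<Rightarrow> 'a measure \<Rightarrow> (nat \<Rightarrow> 'a) \<Rightarrow> bool" where
  "greedy_seq N r P a \<longleftrightarrow>
     (\<forall>n \<xi>. quant_err N r P (a ` {1..n} \<union> {a (Suc n)}) \<le> quant_err N r P (a ` {1..n} \<union> {\<xi>}))"

definition msupp :: "'a::metric_space measure \<Rightarrow> 'a set" where
  "msupp M = {x. \<forall>e>0. emeasure M (ball x e) > 0}"

definition peakless_const :: "('a::euclidean_space \<Rightarrow> real) \<Rightarrow> 'a set \<Rightarrow> 'a \<Rightarrow> real" where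
  "peakless_const N A a = Inf {measure lebesgue (nball N x t \<inter> A) / measure lebesgue (nball N x t)
                               | x t. x \<in> A \<and> 0 < t \<and> t \<le> N (x - a)}"

definition almost_radial_noninc_with ::
  "('a::real_vector \<Rightarrow> real) \<Rightarrow> real \<Rightarrow> ('a \<Rightarrow> real) \<Rightarrow> 'a set \<Rightarrow> 'a \<Rightarrow> bool" where
  "almost_radial_noninc_with N0 M f A a \<longleftrightarrow> is_norm N0 \<and> 0 < M \<and> M \<le> 1 \<and>
     (\<forall>x\<in>A - {a}. \<forall>y\<in>A - {a}. N0 (y - a) \<le> N0 (x - a) \<longrightarrow> f y \<ge> M * f x)"

definition phi_r :: "real \<Rightarrow> nat \<Rightarrow> real \<Rightarrow> real" where
  "phi_r r d u = (3 powr (- r) - u powr r) * u ^ d"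

end

theory Submission
  imports Defs
begin

text \<open>
  Fix n and a point x of A at distance \<rho> = d(x, a^(n)) > 0 from a^(n), and let y be the point of
  the segment [a_1, x] (which lies in A) at distance \<epsilon>\<rho>/2 from x. The ball
  B = B(y, \<epsilon>\<rho>/(2 C_0^2)) is N_0-closer to a_1 than x, so h \<ge> M h(x) on B \<inter> A, and
  peaklessness gives P(B) \<ge> M h(x) p V_d (\<epsilon>\<rho>/(2 C_0^2))^d. Every point of B is within \<epsilon>\<rho>
  of x, hence at distance at least \<rho>/3 from a^(n), so adding y to a^(n) lowers e_r^r by at
  least (3^-r - \<epsilon>^r) \<rho>^r P(B) = c \<rho>^(d+r) h(x); by greedy optimality so does adding a_(n+1).
  With u_n = e_r(a^(n), P)^r, the resulting bound \<rho>^r h \<le> ((u_n - u_(n+1))/c)^(r/(d+r)) h^(d/(d+r))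
  on A integrates to u_n \<le> ((u_n - u_(n+1))/c)^(r/(d+r)) \<integral> h^(d/(d+r)), that is
  u_(n+1) \<le> u_n - c' u_n^(1+d/r). Then u_n^(-d/r) grows at least linearly in n, which is the rate.
\<close>

section \<open>Norms given as functions\<close>

lemma is_norm_nonneg: "is_norm N \<Longrightarrow> 0 \<le> N x"
  by (simp add: is_norm_def)

lemma is_norm_zero [simp]: "is_norm N \<Longrightarrow> N 0 = 0"
  by (simp add: is_norm_def)

lemma is_norm_eq_0_iff: "is_norm N \<Longrightarrow> N x = 0 \<longleftrightarrow> x = 0"
  by (simp add: is_norm_def)

lemma is_norm_scaleR: "is_norm N \<Longrightarrow> N (c *\<^sub>R x) = \<bar>c\<bar> * N x"
  by (simp add: is_norm_def)

lemma is_norm_triangle: "is_norm N \<Longrightarrow> N (x + y) \<le> N x + N y"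
  by (simp add: is_norm_def)

lemma is_norm_minus_commute: "is_norm N \<Longrightarrow> N (x - y) = N (y - x)"
  using is_norm_scaleR[of N "-1" "x - y"] by simp

lemma is_norm_triangle_diff: "is_norm N \<Longrightarrow> N (x - z) \<le> N (x - y) + N (y - z)"
  using is_norm_triangle[of N "x - y" "y - z"] by simp

lemma is_norm_diff_le_add: "is_norm N \<Longrightarrow> N (x - y) \<le> N x + N y"
  using is_norm_triangle_diff[of N x y 0] is_norm_minus_commute[of N 0 y] by simp

lemma is_norm_abs_diff_le: "is_norm N \<Longrightarrow> \<bar>N x - N y\<bar> \<le> N (x - y)"
  using is_norm_triangle[of N "x - y" y] is_norm_triangle[of N "y - x" x]
    is_norm_minus_commute[of N x y] by (simp add: abs_le_iff)

lemma is_norm_sum: "is_norm N \<Longrightarrow> N (sum f S) \<le> (\<Sum>i\<in>S. N (f i))"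
proof (induction S rule: infinite_finite_induct)
  case (insert i S)
  then show ?case using is_norm_triangle[of N "f i" "sum f S"] by simp
qed auto

lemma is_norm_le_norm:
  fixes N :: "'a::euclidean_space \<Rightarrow> real"
  assumes N: "is_norm N"
  obtains K where "0 < K" "\<And>x. N x \<le> K * norm x"
proof (rule that)
  show "0 < 1 + sum N Basis"
    using is_norm_nonneg[OF N] by (simp add: add_pos_nonneg sum_nonneg)
  fix x :: 'a
  have "N x = N (\<Sum>b\<in>Basis. (x \<bullet> b) *\<^sub>R b)"
    by (simp add: euclidean_representation)
  also have "\<dots> \<le> (\<Sum>b\<in>Basis. N ((x \<bullet> b) *\<^sub>R b))"
    by (rule is_norm_sum[OF N])
  also have "\<dots> = (\<Sum>b\<in>Basis. \<bar>x \<bullet> b\<bar> * N b)"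
    by (simp add: is_norm_scaleR[OF N])
  also have "\<dots> \<le> (\<Sum>b\<in>Basis. norm x * N b)"
    by (intro sum_mono mult_right_mono) (auto simp: Basis_le_norm is_norm_nonneg[OF N])
  also have "\<dots> = sum N Basis * norm x"
    by (simp add: sum_distrib_right[symmetric] mult.commute)
  also have "\<dots> \<le> (1 + sum N Basis) * norm x"
    by (simp add: distrib_right)
  finally show "N x \<le> (1 + sum N Basis) * norm x" .
qed

lemma continuous_on_is_norm_Lipschitz:
  fixes N :: "'a::euclidean_space \<Rightarrow> real"
  assumes N: "is_norm N" and f: "\<And>x y. \<bar>f x - f y\<bar> \<le> N (x - y)"
  shows "continuous_on UNIV f"
proof -
  obtain K where K: "0 < K" "\<And>x. N x \<le> K * norm x"
    using is_norm_le_norm[OF N] by blast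
  have "K-lipschitz_on UNIV f"
  proof (rule lipschitz_onI)
    fix x y :: 'a
    show "dist (f x) (f y) \<le> K * dist x y"
      using f[of x y] K(2)[of "x - y"] by (simp add: dist_real_def dist_norm)
  qed (use K in auto)
  then show ?thesis
    by (rule lipschitz_on_continuous_on)
qed

lemma continuous_on_is_norm:
  fixes N :: "'a::euclidean_space \<Rightarrow> real"
  shows "is_norm N \<Longrightarrow> continuous_on UNIV N"
  by (rule continuous_on_is_norm_Lipschitz) (auto intro: is_norm_abs_diff_le)

lemma is_norm_ge_norm:
  fixes N :: "'a::euclidean_space \<Rightarrow> real"
  assumes N: "is_norm N"
  obtains k where "0 < k" "\<And>x. k * norm x \<le> N x"
proof -
  obtain u where u: "u \<in> sphere 0 1" "\<And>y. y \<in> sphere 0 1 \<Longrightarrow> N u \<le> N y"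
    using continuous_attains_inf[OF compact_sphere _ continuous_on_subset[OF continuous_on_is_norm[OF N]],
        of 0 1] by auto
  then have "0 < N u"
    using is_norm_nonneg[OF N, of u] is_norm_eq_0_iff[OF N, of u] by fastforce
  moreover have "N u * norm x \<le> N x" for x
  proof (cases "x = 0")
    case False
    then have "N u \<le> N ((1 / norm x) *\<^sub>R x)"
      using u(2) by simp
    also have "\<dots> = N x / norm x"
      using is_norm_scaleR[OF N] by simp
    finally show ?thesis
      using False by (simp add: field_simps)
  qed (simp add: N)
  ultimately show ?thesis
    using that by blast
qed

section \<open>Balls of a norm\<close>

lemma closed_nball:
  fixes N :: "'a::euclidean_space \<Rightarrow> real"
  assumes N: "is_norm N"
  shows "closed (nball N x t)"
proof -
  have "continuous_on UNIV (\<lambda>y. N (y - x))"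
    by (rule continuous_on_compose2[OF continuous_on_is_norm[OF N]]) (auto intro!: continuous_intros)
  then show ?thesis
    unfolding nball_def by (rule closed_Collect_le) (rule continuous_on_const)
qed

lemma bounded_nball:
  fixes N :: "'a::euclidean_space \<Rightarrow> real"
  assumes N: "is_norm N"
  shows "bounded (nball N x t)"
proof -
  obtain k where k: "0 < k" "\<And>x. k * norm x \<le> N x"
    using is_norm_ge_norm[OF N] by blast
  have "nball N x t \<subseteq> cball x (t / k)"
  proof
    fix y
    assume "y \<in> nball N x t"
    then have "k * norm (y - x) \<le> t"
      using k(2)[of "y - x"] by (simp add: nball_def)
    then show "y \<in> cball x (t / k)"
      using k(1) by (simp add: dist_norm norm_minus_commute field_simps)
  qed
  then show ?thesis
    using bounded_subset by blast
qed

lemma fmeasurable_nball: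
  fixes N :: "'a::euclidean_space \<Rightarrow> real"
  shows "is_norm N \<Longrightarrow> nball N x t \<in> fmeasurable lborel"
  by (simp add: fmeasurable_compact compact_eq_bounded_closed bounded_nball closed_nball)

lemma nball_in_sets_lborel [measurable]:
  fixes N :: "'a::euclidean_space \<Rightarrow> real"
  shows "is_norm N \<Longrightarrow> nball N x t \<in> sets lborel"
  using fmeasurable_nball by (auto simp: fmeasurable_def)

lemma nball_eq_affine_image:
  assumes N: "is_norm N" and t: "0 < t"
  shows "nball N y t = (\<lambda>z. t *\<^sub>R z + y) ` nball N 0 1"
proof (intro set_eqI iffI)
  fix z
  assume "z \<in> nball N y t"
  then have "(1 / t) *\<^sub>R (z - y) \<in> nball N 0 1"
    using t by (simp add: nball_def is_norm_scaleR[OF N])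
  moreover have "z = t *\<^sub>R ((1 / t) *\<^sub>R (z - y)) + y"
    using t by simp
  ultimately show "z \<in> (\<lambda>z. t *\<^sub>R z + y) ` nball N 0 1"
    by blast
next
  fix z
  assume "z \<in> (\<lambda>z. t *\<^sub>R z + y) ` nball N 0 1"
  then obtain w where "N w \<le> 1" "z = t *\<^sub>R w + y"
    by (auto simp: nball_def)
  then show "z \<in> nball N y t"
    using t by (simp add: nball_def is_norm_scaleR[OF N] mult_le_cancel_left1)
qed

lemma measure_nball:
  fixes N :: "'a::euclidean_space \<Rightarrow> real"
  assumes N: "is_norm N" and t: "0 < t"
  shows "measure lebesgue (nball N y t) = t ^ DIM('a) * measure lborel (nball N 0 1)"
  using measure_lebesgue_affine[of t y "nball N 0 1"] nball_in_sets_lborel[OF N] t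
  by (simp add: nball_eq_affine_image[OF N t])

lemma measure_nball_pos:
  fixes N :: "'a::euclidean_space \<Rightarrow> real"
  assumes N: "is_norm N"
  shows "0 < measure lborel (nball N 0 1)"
proof -
  obtain K where K: "0 < K" "\<And>x. N x \<le> K * norm x"
    using is_norm_le_norm[OF N] by blast
  have "ball 0 (1 / K) \<subseteq> nball N 0 1"
  proof
    fix x :: 'a
    assume "x \<in> ball 0 (1 / K)"
    then have "K * norm x \<le> 1"
      using K(1) by (simp add: field_simps)
    then show "x \<in> nball N 0 1"
      using K(2)[of x] by (simp add: nball_def)
  qed
  then have "measure lborel (ball (0::'a) (1 / K)) \<le> measure lborel (nball N 0 1)"
    by (intro measure_mono_fmeasurable fmeasurable_nball[OF N]) auto
  moreover have "0 < measure lborel (ball (0::'a) (1 / K))"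
    using K(1) by (simp only: content_ball_gt_0_iff) simp
  ultimately show ?thesis
    by linarith
qed

lemma peakless_const_le:
  fixes N :: "'a::euclidean_space \<Rightarrow> real"
  assumes N: "is_norm N" and "x \<in> A" "0 < t" "t \<le> N (x - c)"
  shows "peakless_const N A c * measure lebesgue (nball N x t) \<le> measure lebesgue (nball N x t \<inter> A)"
proof -
  have "peakless_const N A c \<le> measure lebesgue (nball N x t \<inter> A) / measure lebesgue (nball N x t)"
    unfolding peakless_const_def
    by (rule cInf_lower) (use assms in \<open>auto intro: bdd_belowI[of _ 0]\<close>)
  moreover have "0 < measure lebesgue (nball N x t)"
    using measure_nball[OF N \<open>0 < t\<close>] measure_nball_pos[OF N] \<open>0 < t\<close> by simp
  ultimately show ?thesis
    by (simp add: field_simps)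
qed

lemma nball_on_segment_closer:
  fixes N N0 :: "'a::real_vector \<Rightarrow> real"
  assumes N: "is_norm N" and N0: "is_norm N0" and C0: "1 \<le> C0"
    and equiv: "\<And>x. N0 x / C0 \<le> N x \<and> N x \<le> C0 * N0 x"
    and \<delta>: "0 < \<delta>" "\<delta> \<le> N (x - c)"
  obtains y where "y \<in> closed_segment c x" "N (x - y) = \<delta>" "N (y - c) = N (x - c) - \<delta>"
    "\<And>z. z \<in> nball N y (\<delta> / C0\<^sup>2) \<Longrightarrow> N0 (z - c) \<le> N0 (x - c)"
proof -
  define L where "L = N (x - c)"
  define s where "s = 1 - \<delta> / L"
  have L: "0 < L"
    using \<delta> by (simp add: L_def)
  have s: "0 \<le> s" "s \<le> 1" "(1 - s) * L = \<delta>"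
    using \<delta> L by (auto simp: s_def L_def field_simps)
  define y where "y = c + s *\<^sub>R (x - c)"
  have "y = (1 - s) *\<^sub>R c + s *\<^sub>R x"
    by (simp add: y_def algebra_simps)
  then have "y \<in> closed_segment c x"
    using s by (auto simp: closed_segment_def)
  moreover have xy: "x - y = (1 - s) *\<^sub>R (x - c)" and yc: "y - c = s *\<^sub>R (x - c)"
    by (simp_all add: y_def algebra_simps)
  moreover have "N (x - y) = \<delta>"
    using s by (simp add: xy is_norm_scaleR[OF N] flip: L_def)
  moreover have "N (y - c) = N (x - c) - \<delta>"
    using s unfolding yc is_norm_scaleR[OF N] L_def[symmetric] by (simp add: algebra_simps)
  moreover have "N0 (z - c) \<le> N0 (x - c)" if z: "z \<in> nball N y (\<delta> / C0\<^sup>2)" for z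
  proof -
    have "N0 (z - y) \<le> C0 * N (z - y)"
      using equiv[of "z - y"] C0 by (simp add: field_simps)
    also have "\<dots> \<le> C0 * (\<delta> / C0\<^sup>2)"
      using z C0 by (intro mult_left_mono) (simp_all add: nball_def)
    also have "\<dots> = (1 - s) * (L / C0)"
      using C0 s(3) by (simp add: power2_eq_square field_simps)
    also have "\<dots> \<le> (1 - s) * N0 (x - c)"
      using equiv[of "x - c"] C0 s(2) by (intro mult_left_mono) (simp_all add: L_def field_simps)
    finally have "N0 (z - y) + N0 (y - c) \<le> N0 (x - c)"
      using s(1) unfolding yc is_norm_scaleR[OF N0] by (simp add: algebra_simps)
    then show ?thesis
      using is_norm_triangle_diff[OF N0, of z c y] by linarith
  qed
  ultimately show ?thesis
    using that by blast
qed

section \<open>Distance to a finite set\<close>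

lemma dist_set_le: "finite G \<Longrightarrow> g \<in> G \<Longrightarrow> dist_set N x G \<le> N (x - g)"
  unfolding dist_set_def by (rule Min_le) auto

lemma dist_set_attained:
  assumes "finite G" "G \<noteq> {}"
  obtains g where "g \<in> G" "dist_set N x G = N (x - g)"
proof -
  have "Min ((\<lambda>g. N (x - g)) ` G) \<in> (\<lambda>g. N (x - g)) ` G"
    using assms by (intro Min_in) auto
  then show ?thesis
    using that unfolding dist_set_def by auto
qed

lemma dist_set_nonneg: "is_norm N \<Longrightarrow> finite G \<Longrightarrow> G \<noteq> {} \<Longrightarrow> 0 \<le> dist_set N x G"
  by (metis dist_set_attained is_norm_nonneg)

lemma dist_set_antimono:
  "finite G' \<Longrightarrow> G \<subseteq> G' \<Longrightarrow> G \<noteq> {} \<Longrightarrow> dist_set N x G' \<le> dist_set N x G"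
  by (metis dist_set_attained dist_set_le finite_subset subsetD)

lemma dist_set_triangle:
  assumes N: "is_norm N" and G: "finite G" "G \<noteq> {}"
  shows "dist_set N x G \<le> dist_set N z G + N (x - z)"
proof -
  obtain g where g: "g \<in> G" "dist_set N z G = N (z - g)"
    using dist_set_attained[OF G] by blast
  have "dist_set N x G \<le> N (x - g)"
    by (rule dist_set_le[OF G(1) g(1)])
  also have "\<dots> \<le> N (x - z) + N (z - g)"
    by (rule is_norm_triangle_diff[OF N])
  finally show ?thesis
    using g(2) by simp
qed

lemma borel_measurable_dist_set:
  fixes N :: "'a::euclidean_space \<Rightarrow> real"
  assumes N: "is_norm N" and G: "finite G" "G \<noteq> {}"
  shows "(\<lambda>x. dist_set N x G) \<in> borel_measurable borel"
proof (intro borel_measurable_continuous_onI continuous_on_is_norm_Lipschitz[OF N])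
  fix x y :: 'a
  show "\<bar>dist_set N x G - dist_set N y G\<bar> \<le> N (x - y)"
    using dist_set_triangle[OF N G, of x y] dist_set_triangle[OF N G, of y x]
      is_norm_minus_commute[OF N, of x y] by linarith
qed

lemma dist_set_powr_gap_on_nball:
  assumes N: "is_norm N" and G: "finite G" "G \<noteq> {}" and r: "0 < r"
    and \<epsilon>: "0 < \<epsilon>" "\<epsilon> < 1/3" and t: "0 \<le> t"
    and close: "N (x - y) + t \<le> \<epsilon> * dist_set N x G" and z: "z \<in> nball N y t"
  shows "dist_set N x G powr r * (3 powr - r - \<epsilon> powr r) + t powr r \<le> dist_set N z G powr r"
proof -
  define \<rho> where "\<rho> = dist_set N x G"
  have \<rho>: "0 \<le> \<rho>"
    unfolding \<rho>_def by (rule dist_set_nonneg[OF N G])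
  have "N (x - z) \<le> N (x - y) + N (y - z)"
    by (rule is_norm_triangle_diff[OF N])
  also have "\<dots> \<le> \<epsilon> * \<rho>"
    using close z is_norm_minus_commute[OF N, of z y] by (simp add: nball_def \<rho>_def)
  also have "\<dots> \<le> 1/3 * \<rho>"
    using \<epsilon> \<rho> by (intro mult_right_mono) auto
  finally have "\<rho> / 3 \<le> dist_set N z G"
    using dist_set_triangle[OF N G, of x z] \<rho> unfolding \<rho>_def[symmetric] by linarith
  then have "\<rho> powr r * 3 powr - r \<le> dist_set N z G powr r"
    using \<rho> r by (simp add: powr_minus_divide powr_divide[symmetric] powr_mono2)
  moreover have "t powr r \<le> \<epsilon> powr r * \<rho> powr r"
    using close \<epsilon> \<rho> t r is_norm_nonneg[OF N, of "x - y"]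
    by (simp add: powr_mult[symmetric] \<rho>_def powr_mono2)
  ultimately show ?thesis
    by (simp add: \<rho>_def algebra_simps)
qed

section \<open>Real inequalities\<close>

lemma powr_add_le_two_powr:
  fixes x y r :: real
  assumes "0 \<le> x" "0 \<le> y" "0 < r"
  shows "(x + y) powr r \<le> 2 powr r * (x powr r + y powr r)"
proof -
  have "(x + y) powr r \<le> (2 * max x y) powr r"
    using assms by (intro powr_mono2) auto
  also have "\<dots> = 2 powr r * max x y powr r"
    using assms by (simp add: powr_mult)
  also have "\<dots> \<le> 2 powr r * (x powr r + y powr r)"
    using assms by (intro mult_left_mono) (auto simp: max_def)
  finally show ?thesis .
qed

lemma Bernoulli_inequality_powr_neg:
  fixes y \<alpha> :: real
  assumes "0 \<le> y" "y < 1" "0 < \<alpha>"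
  shows "1 + \<alpha> * y \<le> (1 - y) powr - \<alpha>"
proof -
  have "\<alpha> * y \<le> \<alpha> * - ln (1 - y)"
    using ln_le_minus_one[of "1 - y"] assms by (intro mult_left_mono) auto
  have "1 + \<alpha> * y \<le> exp (\<alpha> * y)"
    by (rule exp_ge_add_one_self)
  also have "\<dots> \<le> exp (- \<alpha> * ln (1 - y))"
    using \<open>\<alpha> * y \<le> \<alpha> * - ln (1 - y)\<close> by simp
  also have "\<dots> = (1 - y) powr - \<alpha>"
    using assms by (simp add: powr_def)
  finally show ?thesis .
qed

lemma powr_neg_increment:
  fixes v w c \<alpha> :: real
  assumes "0 < v" "0 < w" "0 < c" "0 < \<alpha>" and step: "v \<le> w - c * w powr (1 + \<alpha>)"
  shows "w powr - \<alpha> + \<alpha> * c \<le> v powr - \<alpha>"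
proof -
  define y where "y = c * w powr \<alpha>"
  have v_le: "v \<le> w * (1 - y)"
    using step assms by (simp add: y_def powr_add algebra_simps)
  have y: "0 \<le> y" "y < 1"
    using assms v_le by (auto simp: y_def) (smt (verit) mult_nonneg_nonpos)
  have "w powr - \<alpha> + \<alpha> * c = w powr - \<alpha> * (1 + \<alpha> * y)"
    using assms by (simp add: y_def algebra_simps powr_add[symmetric])
  also have "\<dots> \<le> w powr - \<alpha> * (1 - y) powr - \<alpha>"
    by (rule mult_left_mono[OF Bernoulli_inequality_powr_neg[OF y \<open>0 < \<alpha>\<close>]]) simp
  also have "\<dots> = (w * (1 - y)) powr - \<alpha>"
    using assms y by (simp add: powr_mult)
  also have "\<dots> \<le> v powr - \<alpha>"
    using assms v_le by (intro powr_mono2') auto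
  finally show ?thesis .
qed

text \<open>
  The discrete analogue of u' = -c u^(1+\<alpha>): u_n^(-\<alpha>) grows at least by \<alpha> c per step.
\<close>

lemma recursion_decay:
  fixes u :: "nat \<Rightarrow> real" and c \<alpha> :: real
  assumes c: "0 < c" and \<alpha>: "0 < \<alpha>" and nonneg: "\<And>m. 1 \<le> m \<Longrightarrow> 0 \<le> u m"
    and step: "\<And>m. 1 \<le> m \<Longrightarrow> u (Suc m) \<le> u m - c * u m powr (1 + \<alpha>)"
    and n: "2 \<le> n"
  shows "u n \<le> (\<alpha> * c * (real n - 1)) powr (- 1 / \<alpha>)"
proof -
  have growth: "0 < u (Suc m) \<Longrightarrow> \<alpha> * c * real m \<le> u (Suc m) powr - \<alpha>" for m
  proof (induction m)
    case (Suc m)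
    have st: "u (Suc (Suc m)) \<le> u (Suc m) - c * u (Suc m) powr (1 + \<alpha>)"
      using step by simp
    then have "0 < u (Suc m)"
      using Suc.prems c by (smt (verit) powr_ge_zero mult_nonneg_nonneg)
    then have "u (Suc m) powr - \<alpha> + \<alpha> * c \<le> u (Suc (Suc m)) powr - \<alpha>"
      using powr_neg_increment[OF Suc.prems _ c \<alpha> st] by blast
    then show ?case
      using Suc.IH \<open>0 < u (Suc m)\<close> by (simp add: algebra_simps)
  qed simp
  show ?thesis
  proof (cases "u n = 0")
    case False
    then have pos: "0 < u n"
      using nonneg n by (simp add: order_less_le)
    obtain m where m: "n = Suc m" "1 \<le> m"
      using n by (cases n) auto
    have "\<alpha> * c * real m \<le> u n powr - \<alpha>"
      using growth pos m(1) by blast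
    then have "(u n powr - \<alpha>) powr (- 1 / \<alpha>) \<le> (\<alpha> * c * real m) powr (- 1 / \<alpha>)"
      using m c \<alpha> by (intro powr_mono2') auto
    then show ?thesis
      using pos \<alpha> m(1) by (simp add: powr_powr)
  qed simp
qed

lemma mult_powr_le_interpolation:
  fixes \<rho> H K d r :: real
  assumes "0 \<le> \<rho>" "0 \<le> H" "0 < d" "0 < r" and bound: "\<rho> powr (d + r) * H \<le> K"
  shows "\<rho> powr r * H \<le> K powr (r / (d + r)) * H powr (d / (d + r))"
proof (cases "\<rho> = 0 \<or> H = 0")
  case False
  then have pos: "0 < \<rho>" "0 < H" "0 < d + r"
    using assms by auto
  have H: "H powr ((r + d) / (d + r)) = H"
    using pos by (simp add: add.commute)
  have "\<rho> powr r * H = (\<rho> powr (d + r) * H) powr (r / (d + r)) * H powr (d / (d + r))"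
    using pos by (simp add: powr_mult powr_powr mult.assoc powr_add[symmetric] add_divide_distrib[symmetric] H)
  also have "\<dots> \<le> K powr (r / (d + r)) * H powr (d / (d + r))"
    using pos bound assms(4) by (intro mult_right_mono powr_mono2) auto
  finally show ?thesis .
qed (use assms in auto)

lemma greedy_rate_constant_eq:
  fixes V p \<phi> M S C0 r m :: real and d :: nat
  assumes "0 < V" "0 < p" "0 < \<phi>" "0 < M" "0 < S" "0 < C0" "0 < r" "0 < m" "0 < d"
  shows "((real d / r) * (V * p * \<phi> * M / (2 * C0\<^sup>2) ^ d / S powr ((real d + r) / r)) * m) powr (- 1 / real d)
    = 2 * C0\<^sup>2 * r powr (1 / real d)
        / (real d powr (1 / real d) * M powr (1 / real d) * V powr (1 / real d) * p powr (1 / real d))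
      * \<phi> powr (- 1 / real d) * (S powr ((real d + r) / real d)) powr (1 / r) * m powr (- 1 / real d)"
    (is "?L = ?R")
proof -
  have L: "0 < ?L" and R: "0 < ?R"
    using assms by auto
  have "ln ?L = ln ?R"
    using assms by (simp add: ln_mult ln_div ln_powr ln_realpow field_simps)
  then show ?thesis
    using ln_inj_iff[OF L R] by blast
qed

lemma le_mult_INF:
  fixes f :: "'b \<Rightarrow> real"
  assumes "U \<noteq> {}" "0 \<le> c" "\<And>u. u \<in> U \<Longrightarrow> 0 \<le> f u" "\<And>u. u \<in> U \<Longrightarrow> L \<le> c * f u"
  shows "L \<le> c * (INF u\<in>U. f u)"
proof (cases "c = 0")
  case True
  then show ?thesis
    using assms by fastforce
next
  case False
  then have "L / c \<le> (INF u\<in>U. f u)"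
    using assms by (intro cINF_greatest) (auto simp: field_simps)
  then show ?thesis
    using False assms(2) by (simp add: field_simps)
qed

lemma powr_less_three_powr_neg:
  fixes r \<epsilon> :: real
  shows "0 < r \<Longrightarrow> 0 < \<epsilon> \<Longrightarrow> \<epsilon> < 1/3 \<Longrightarrow> \<epsilon> powr r < 3 powr - r"
  using powr_less_mono2[of r \<epsilon> "1/3"] by (simp add: powr_minus_divide powr_divide)

lemma phi_r_pos: "0 < r \<Longrightarrow> 0 < \<epsilon> \<Longrightarrow> \<epsilon> < 1/3 \<Longrightarrow> 0 < phi_r r d \<epsilon>"
  using powr_less_three_powr_neg[of r \<epsilon>] by (simp add: phi_r_def)

section \<open>Measures with a density\<close>

lemma AE_in_msupp:
  fixes M :: "'a::{metric_space, second_countable_topology} measure"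
  assumes sets_M: "sets M = sets borel"
  shows "AE x in M. x \<in> msupp M"
proof -
  define F where "F = {ball x e | x e. 0 < e \<and> emeasure M (ball x e) = 0}"
  obtain F' where F': "F' \<subseteq> F" "countable F'" "\<Union>F' = \<Union>F"
    using Lindelof[of F] by (auto simp: F_def)
  have "(\<Union>S\<in>F'. S) \<in> null_sets M"
    using F' sets_M by (intro null_sets_UN') (auto simp: F_def null_sets_def)
  moreover have "{x \<in> space M. x \<notin> msupp M} \<subseteq> (\<Union>S\<in>F'. S)"
    unfolding image_ident F'(3)
  proof
    fix x
    assume "x \<in> {x \<in> space M. x \<notin> msupp M}"
    then obtain e where "0 < e" "emeasure M (ball x e) = 0"
      by (auto simp: msupp_def not_less)
    then show "x \<in> \<Union>F"
      using centre_in_ball[of x e] unfolding F_def by blast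
  qed
  ultimately show ?thesis
    by (rule AE_I')
qed

locale quantization_density =
  fixes N :: "'a::euclidean_space \<Rightarrow> real" and r :: real and h :: "'a \<Rightarrow> real"
  assumes r_pos: "0 < r"
    and norm_N: "is_norm N"
    and h_borel [measurable]: "h \<in> borel_measurable lborel"
    and h_nonneg: "\<And>x. 0 \<le> h x"
    and prob_space_P: "prob_space (density lborel (\<lambda>x. ennreal (h x)))"
    and moment: "integrable (density lborel (\<lambda>x. ennreal (h x))) (\<lambda>x. N x powr r)"
begin

abbreviation P :: "'a measure" where
  "P \<equiv> density lborel (\<lambda>x. ennreal (h x))"

definition distortion :: "'a set \<Rightarrow> real" where
  "distortion G = (\<integral>x. dist_set N x G powr r \<partial>P)"

lemma finite_measure_P: "finite_measure P"
  using prob_space_P by (rule prob_space.finite_measure)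

lemma distortion_nonneg: "0 \<le> distortion G"
  unfolding distortion_def by (rule integral_nonneg_AE) simp

lemma quant_err_eq_distortion: "quant_err N r P G = distortion G powr (1 / r)"
  by (simp add: quant_err_def distortion_def)

lemma integrable_dist_set_powr:
  assumes G: "finite G" "G \<noteq> {}"
  shows "integrable P (\<lambda>x. dist_set N x G powr r)"
proof -
  obtain g where g: "g \<in> G"
    using G by blast
  have [measurable]: "(\<lambda>x. dist_set N x G) \<in> borel_measurable borel"
    by (rule borel_measurable_dist_set[OF norm_N G])
  have "integrable P (\<lambda>x. 2 powr r * (N x powr r + N g powr r))"
    by (intro integrable_mult_right Bochner_Integration.integrable_add moment
        finite_measure.integrable_const[OF finite_measure_P])
  then show ?thesis
  proof (rule Bochner_Integration.integrable_bound)
    show "AE x in P. norm (dist_set N x G powr r) \<le> norm (2 powr r * (N x powr r + N g powr r))"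
    proof (rule AE_I2)
      fix x
      have "dist_set N x G powr r \<le> (N x + N g) powr r"
        using dist_set_le[OF G(1) g] is_norm_diff_le_add[OF norm_N] dist_set_nonneg[OF norm_N G] r_pos
        by (meson order_trans powr_mono2 less_imp_le)
      also have "\<dots> \<le> 2 powr r * (N x powr r + N g powr r)"
        using is_norm_nonneg[OF norm_N] r_pos by (intro powr_add_le_two_powr)
      finally show "norm (dist_set N x G powr r) \<le> norm (2 powr r * (N x powr r + N g powr r))"
        by simp
    qed
  qed auto
qed

lemma distortion_insert_gain:
  assumes G: "finite G" "G \<noteq> {}" and g: "0 \<le> g"
    and gap: "\<And>z. z \<in> nball N y t \<Longrightarrow> g + t powr r \<le> dist_set N z G powr r"
  shows "g * measure P (nball N y t) \<le> distortion G - distortion (insert y G)"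
proof -
  let ?B = "nball N y t"
  have iG: "integrable P (\<lambda>x. dist_set N x G powr r)"
    and iyG: "integrable P (\<lambda>x. dist_set N x (insert y G) powr r)"
    using G by (auto intro!: integrable_dist_set_powr)
  have "g * measure P ?B = (\<integral>z. g * indicator ?B z \<partial>P)"
    by simp
  also have "\<dots> \<le> (\<integral>z. dist_set N z G powr r - dist_set N z (insert y G) powr r \<partial>P)"
  proof (rule integral_mono)
    show "integrable P (\<lambda>z. g * indicator ?B z)"
      using nball_in_sets_lborel[OF norm_N] finite_measure.emeasure_eq_measure[OF finite_measure_P]
      by (intro integrable_mult_right integrable_real_indicator) auto
    show "integrable P (\<lambda>z. dist_set N z G powr r - dist_set N z (insert y G) powr r)"
      using iG iyG by simp
    fix z
    have yG: "dist_set N z (insert y G) powr r \<le> dist_set N z G powr r"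
      using G dist_set_antimono[of "insert y G" G N z] dist_set_nonneg[OF norm_N, of "insert y G" z] r_pos
      by (intro powr_mono2) auto
    show "g * indicator ?B z \<le> dist_set N z G powr r - dist_set N z (insert y G) powr r"
    proof (cases "z \<in> ?B")
      case True
      then have "dist_set N z (insert y G) \<le> t"
        using dist_set_le[of "insert y G" y N z] G(1) by (simp add: nball_def)
      then have "dist_set N z (insert y G) powr r \<le> t powr r"
        using dist_set_nonneg[OF norm_N, of "insert y G" z] G(1) r_pos by (intro powr_mono2) auto
      then show ?thesis
        using gap[OF True] True by simp
    qed (use yG in simp)
  qed
  also have "\<dots> = distortion G - distortion (insert y G)"
    unfolding distortion_def using iG iyG by simp
  finally show ?thesis .
qed

lemma measure_P_ge:
  assumes B: "B \<in> sets borel" and S: "S \<in> sets lebesgue" "S \<subseteq> B" "emeasure lebesgue S < \<infinity>"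
    and m: "0 \<le> m" and h_ge: "AE z in lebesgue. z \<in> S \<longrightarrow> m \<le> h z"
  shows "m * measure lebesgue S \<le> measure P B"
proof -
  have "ennreal (m * measure lebesgue S) = (\<integral>\<^sup>+ z. ennreal m * indicator S z \<partial>lebesgue)"
    using S m by (simp add: nn_integral_cmult_indicator emeasure_eq_ennreal_measure ennreal_mult)
  also have "\<dots> \<le> (\<integral>\<^sup>+ z. ennreal (h z) * indicator B z \<partial>lebesgue)"
  proof (rule nn_integral_mono_AE)
    show "AE z in lebesgue. ennreal m * indicator S z \<le> ennreal (h z) * indicator B z"
      using h_ge by eventually_elim (use S(2) in \<open>auto simp: indicator_def intro: ennreal_leI\<close>)
  qed
  also have "\<dots> = emeasure P B"
    using B by (simp add: emeasure_density nn_integral_completion)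
  also have "\<dots> = ennreal (measure P B)"
    using finite_measure.emeasure_eq_measure[OF finite_measure_P] by simp
  finally show ?thesis
    using measure_nonneg[of P B] by (auto simp: ennreal_le_iff2)
qed

lemma measure_P_nball_ge_peakless:
  assumes A: "A \<in> sets lebesgue" and y: "y \<in> A" "0 < t" "t \<le> N (y - c)" and m: "0 \<le> m"
    and h_ge: "\<And>z. z \<in> nball N y t \<inter> A - {c} \<Longrightarrow> m \<le> h z"
  shows "m * peakless_const N A c * (t ^ DIM('a) * measure lborel (nball N 0 1))
    \<le> measure P (nball N y t)"
proof -
  let ?B = "nball N y t"
  have "m * peakless_const N A c * (t ^ DIM('a) * measure lborel (nball N 0 1))
      \<le> m * measure lebesgue (?B \<inter> A)"
    using peakless_const_le[OF norm_N y] measure_nball[OF norm_N \<open>0 < t\<close>] m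
    by (simp add: mult.assoc mult_left_mono)
  also have "\<dots> \<le> measure P ?B"
  proof (rule measure_P_ge)
    show "emeasure lebesgue (?B \<inter> A) < \<infinity>"
      using fmeasurable_nball[OF norm_N, of y t] A
      by (auto simp: fmeasurable_def intro: le_less_trans[OF emeasure_mono])
    have "{c} \<in> null_sets lebesgue"
      by (simp add: negligible_iff_null_sets[symmetric])
    then show "AE z in lebesgue. z \<in> ?B \<inter> A \<longrightarrow> m \<le> h z"
      using h_ge by (auto intro!: AE_I'[of "{c}"])
  qed (use A m nball_in_sets_lborel[OF norm_N, of y t] in auto)
  finally show ?thesis .
qed

lemma AE_h_pos_imp_in:
  assumes "msupp P \<subseteq> A"
  shows "AE x in lborel. 0 < h x \<longrightarrow> x \<in> A"
proof -
  have "AE x in P. x \<in> A"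
    using AE_in_msupp[of P] assms by (auto elim: AE_mp)
  then show ?thesis
    by (simp add: AE_density)
qed

lemma distortion_le_pointwise:
  assumes G: "finite G" "G \<noteq> {}" and supp: "msupp P \<subseteq> A"
    and h_Lp: "integrable lborel (\<lambda>x. h x powr (real DIM('a) / (real DIM('a) + r)))"
    and K: "0 \<le> K" and bound: "\<And>x. x \<in> A \<Longrightarrow> dist_set N x G powr (real DIM('a) + r) * h x \<le> K"
  shows "distortion G \<le> K powr (r / (real DIM('a) + r))
    * (\<integral>x. h x powr (real DIM('a) / (real DIM('a) + r)) \<partial>lborel)"
proof -
  let ?q = "r / (real DIM('a) + r)" and ?p = "real DIM('a) / (real DIM('a) + r)"
  have [measurable]: "(\<lambda>x. dist_set N x G) \<in> borel_measurable borel"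
    by (rule borel_measurable_dist_set[OF norm_N G])
  have pointwise: "h x * dist_set N x G powr r \<le> K powr ?q * h x powr ?p" if "0 < h x \<longrightarrow> x \<in> A" for x
  proof (cases "h x = 0")
    case False
    then have "x \<in> A"
      using that h_nonneg[of x] by simp
    then show ?thesis
      using mult_powr_le_interpolation[OF dist_set_nonneg[OF norm_N G] h_nonneg _ r_pos bound]
      by (simp add: mult.commute)
  qed simp
  have "distortion G = (\<integral>x. h x * dist_set N x G powr r \<partial>lborel)"
    unfolding distortion_def using h_nonneg by (subst integral_density) auto
  also have "\<dots> \<le> (\<integral>x. K powr ?q * h x powr ?p \<partial>lborel)"
  proof (rule integral_mono_AE)
    show "integrable lborel (\<lambda>x. h x * dist_set N x G powr r)"
      using integrable_dist_set_powr[OF G] h_nonneg by (subst (asm) integrable_density) auto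
    show "integrable lborel (\<lambda>x. K powr ?q * h x powr ?p)"
      using h_Lp by simp
    show "AE x in lborel. h x * dist_set N x G powr r \<le> K powr ?q * h x powr ?p"
      using AE_h_pos_imp_in[OF supp] by eventually_elim (rule pointwise)
  qed
  also have "\<dots> = K powr ?q * (\<integral>x. h x powr ?p \<partial>lborel)"
    by simp
  finally show ?thesis .
qed

end

section \<open>Greedy quantization\<close>

locale greedy_quantization = quantization_density N r h
  for N :: "'a::euclidean_space \<Rightarrow> real" and r h +
  fixes a :: "nat \<Rightarrow> 'a" and A :: "'a set" and N0 :: "'a \<Rightarrow> real" and M C0 :: real
  assumes greedy: "greedy_seq N r (density lborel (\<lambda>x. ennreal (h x))) a"
    and h_Lp: "integrable lborel (\<lambda>x. h x powr (real DIM('a) / (real DIM('a) + r)))"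
    and A_lebesgue: "A \<in> sets lebesgue"
    and supp_subset: "msupp (density lborel (\<lambda>x. ennreal (h x))) \<subseteq> A"
    and star_shaped: "\<And>x. x \<in> A \<Longrightarrow> closed_segment (a 1) x \<subseteq> A"
    and peakless: "0 < peakless_const N A (a 1)"
    and radial: "almost_radial_noninc_with N0 M h A (a 1)"
    and C0: "1 \<le> C0"
    and norm_equiv: "\<And>x. N0 x / C0 \<le> N x \<and> N x \<le> C0 * N0 x"
begin

lemma norm_N0: "is_norm N0"
  and M_pos: "0 < M" and M_le_1: "M \<le> 1"
  using radial by (auto simp: almost_radial_noninc_with_def)

definition gain_const :: "real \<Rightarrow> real" where
  "gain_const \<epsilon> = measure lborel (nball N 0 1) * peakless_const N A (a 1) * phi_r r DIM('a) \<epsilon> * M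
     / (2 * C0\<^sup>2) ^ DIM('a)"

lemma gain_const_pos: "0 < \<epsilon> \<Longrightarrow> \<epsilon> < 1/3 \<Longrightarrow> 0 < gain_const \<epsilon>"
  using measure_nball_pos[OF norm_N] peakless phi_r_pos[OF r_pos] M_pos C0
  by (simp add: gain_const_def)

lemma distortion_greedy_le:
  "distortion (a ` {1..Suc n}) \<le> distortion (insert y (a ` {1..n}))"
proof -
  have "a ` {1..n} \<union> {a (Suc n)} = a ` {1..Suc n}" "a ` {1..n} \<union> {y} = insert y (a ` {1..n})"
    by (auto simp: atLeastAtMostSuc_conv)
  then have le: "distortion (a ` {1..Suc n}) powr (1 / r) \<le> distortion (insert y (a ` {1..n})) powr (1 / r)"
    using greedy unfolding greedy_seq_def quant_err_eq_distortion by metis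
  have "(distortion (a ` {1..Suc n}) powr (1 / r)) powr r
      \<le> (distortion (insert y (a ` {1..n})) powr (1 / r)) powr r"
    using r_pos by (intro powr_mono2[OF _ _ le]) auto
  then show ?thesis
    using r_pos distortion_nonneg by (simp add: powr_powr)
qed

lemma distortion_greedy_decreasing:
  "1 \<le> n \<Longrightarrow> distortion (a ` {1..Suc n}) \<le> distortion (a ` {1..n})"
  using distortion_greedy_le[of n "a 1"] by (simp add: insert_absorb)

lemma exists_insert_decreasing_distortion:
  assumes G: "finite G" "a 1 \<in> G" and x: "x \<in> A" and \<epsilon>: "0 < \<epsilon>" "\<epsilon> < 1/3"
    and \<rho>: "0 < dist_set N x G"
  obtains y where "gain_const \<epsilon> * (dist_set N x G powr (real DIM('a) + r) * h x)
    \<le> distortion G - distortion (insert y G)"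
proof -
  define \<rho> where "\<rho> = dist_set N x G"
  define \<delta> where "\<delta> = \<epsilon> * \<rho> / 2"
  define t where "t = \<delta> / C0\<^sup>2"
  have G_ne: "G \<noteq> {}"
    using G by blast
  have \<rho>_le: "\<rho> \<le> N (x - a 1)"
    unfolding \<rho>_def by (rule dist_set_le[OF G])
  have \<delta>: "0 < \<delta>" "2 * \<delta> \<le> N (x - a 1)"
    using \<rho> \<epsilon> \<rho>_le by (auto simp: \<delta>_def \<rho>_def intro: order_trans[OF mult_left_le_one_le])
  have t: "0 < t" "t \<le> \<delta>"
    using \<delta> C0 by (auto simp: t_def field_simps intro: order_trans[OF _ power_increasing[of 0 2 C0]])
  obtain y where y: "y \<in> closed_segment (a 1) x" "N (x - y) = \<delta>" "N (y - a 1) = N (x - a 1) - \<delta>"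
    and closer: "\<And>z. z \<in> nball N y t \<Longrightarrow> N0 (z - a 1) \<le> N0 (x - a 1)"
    using nball_on_segment_closer[OF norm_N norm_N0 C0 norm_equiv, of \<delta> x "a 1"] \<delta>
    unfolding t_def by auto
  have "x \<noteq> a 1"
    using \<rho> \<rho>_le norm_N by (auto simp: \<rho>_def)
  then have h_ge: "M * h x \<le> h z" if "z \<in> nball N y t \<inter> A - {a 1}" for z
    using radial x that closer[of z] by (auto simp: almost_radial_noninc_with_def)
  have yA: "y \<in> A"
    using star_shaped[OF x] y(1) by blast
  have ty: "t \<le> N (y - a 1)"
    using y(3) \<delta>(2) t(2) by linarith
  have gap: "\<rho> powr r * (3 powr - r - \<epsilon> powr r) + t powr r \<le> dist_set N z G powr r"
    if "z \<in> nball N y t" for z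
    using dist_set_powr_gap_on_nball[OF norm_N G(1) G_ne r_pos \<epsilon> _ _ that] t y(2)
    by (simp add: \<rho>_def \<delta>_def)
  have gap_pos: "0 \<le> \<rho> powr r * (3 powr - r - \<epsilon> powr r)"
    using powr_less_three_powr_neg[OF r_pos \<epsilon>] by simp
  have "gain_const \<epsilon> * (\<rho> powr (real DIM('a) + r) * h x)
      = \<rho> powr r * (3 powr - r - \<epsilon> powr r)
        * (M * h x * peakless_const N A (a 1) * (t ^ DIM('a) * measure lborel (nball N 0 1)))"
    using \<rho> by (simp add: gain_const_def phi_r_def t_def \<delta>_def \<rho>_def powr_add powr_realpow
        power_divide power_mult_distrib field_simps)
  also have "\<dots> \<le> \<rho> powr r * (3 powr - r - \<epsilon> powr r) * measure P (nball N y t)"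
    using measure_P_nball_ge_peakless[OF A_lebesgue yA t(1) ty _ h_ge] M_pos h_nonneg[of x] gap_pos
    by (intro mult_left_mono) auto
  also have "\<dots> \<le> distortion G - distortion (insert y G)"
    by (rule distortion_insert_gain[OF G(1) G_ne gap_pos gap])
  finally show ?thesis
    using that by (simp add: \<rho>_def)
qed

lemma greedy_gain:
  assumes n: "1 \<le> n" and x: "x \<in> A" and \<epsilon>: "0 < \<epsilon>" "\<epsilon> < 1/3"
  shows "gain_const \<epsilon> * (dist_set N x (a ` {1..n}) powr (real DIM('a) + r) * h x)
    \<le> distortion (a ` {1..n}) - distortion (a ` {1..Suc n})"
proof -
  have G: "finite (a ` {1..n})" "a 1 \<in> a ` {1..n}"
    using n by auto
  then have "0 \<le> dist_set N x (a ` {1..n})"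
    by (intro dist_set_nonneg[OF norm_N]) auto
  then consider "dist_set N x (a ` {1..n}) = 0" | "0 < dist_set N x (a ` {1..n})"
    by fastforce
  then show ?thesis
  proof cases
    case 1
    then show ?thesis
      using distortion_greedy_decreasing[OF n] r_pos by simp
  next
    case 2
    obtain y where "gain_const \<epsilon> * (dist_set N x (a ` {1..n}) powr (real DIM('a) + r) * h x)
        \<le> distortion (a ` {1..n}) - distortion (insert y (a ` {1..n}))"
      using exists_insert_decreasing_distortion[OF G x \<epsilon> 2] by blast
    then show ?thesis
      using distortion_greedy_le[of n y] by linarith
  qed
qed

lemma distortion_greedy_le_decrement:
  assumes n: "1 \<le> n" and \<epsilon>: "0 < \<epsilon>" "\<epsilon> < 1/3"
  shows "distortion (a ` {1..n})
    \<le> ((distortion (a ` {1..n}) - distortion (a ` {1..Suc n})) / gain_const \<epsilon>) powr (r / (real DIM('a) + r))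
      * (\<integral>x. h x powr (real DIM('a) / (real DIM('a) + r)) \<partial>lborel)"
proof (rule distortion_le_pointwise[OF _ _ supp_subset h_Lp])
  show "0 \<le> (distortion (a ` {1..n}) - distortion (a ` {1..Suc n})) / gain_const \<epsilon>"
    using distortion_greedy_decreasing[OF n] gain_const_pos[OF \<epsilon>] by simp
  show "dist_set N x (a ` {1..n}) powr (real DIM('a) + r) * h x
      \<le> (distortion (a ` {1..n}) - distortion (a ` {1..Suc n})) / gain_const \<epsilon>" if "x \<in> A" for x
    using greedy_gain[OF n that \<epsilon>] gain_const_pos[OF \<epsilon>] by (simp add: field_simps)
qed (use n in auto)

lemma distortion_greedy_recursion:
  assumes m: "1 \<le> m" and \<epsilon>: "0 < \<epsilon>" "\<epsilon> < 1/3"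
    and S: "0 < (\<integral>x. h x powr (real DIM('a) / (real DIM('a) + r)) \<partial>lborel)"
  shows "distortion (a ` {1..Suc m}) \<le> distortion (a ` {1..m})
    - gain_const \<epsilon> / (\<integral>x. h x powr (real DIM('a) / (real DIM('a) + r)) \<partial>lborel)
        powr ((real DIM('a) + r) / r)
      * distortion (a ` {1..m}) powr (1 + real DIM('a) / r)"
proof -
  define d where "d = real DIM('a)"
  define S where "S = (\<integral>x. h x powr (real DIM('a) / (real DIM('a) + r)) \<partial>lborel)"
  define u where "u = distortion (a ` {1..m})"
  define X where "X = (u - distortion (a ` {1..Suc m})) / gain_const \<epsilon>"
  have d: "0 < d"
    by (simp add: d_def)
  have X: "0 \<le> X"
    using distortion_greedy_decreasing[OF m] gain_const_pos[OF \<epsilon>] by (simp add: X_def u_def)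
  have "u / S \<le> X powr (r / (d + r))"
    using distortion_greedy_le_decrement[OF m \<epsilon>] S by (simp add: X_def u_def d_def S_def divide_le_eq)
  then have "(u / S) powr ((d + r) / r) \<le> (X powr (r / (d + r))) powr ((d + r) / r)"
    using S distortion_nonneg r_pos d by (intro powr_mono2) (auto simp: u_def S_def)
  also have "\<dots> = X"
    using X d r_pos by (simp add: powr_powr)
  finally have "gain_const \<epsilon> / S powr ((d + r) / r) * u powr ((d + r) / r)
      \<le> u - distortion (a ` {1..Suc m})"
    using S gain_const_pos[OF \<epsilon>] distortion_nonneg
    by (simp add: X_def powr_divide u_def S_def field_simps)
  moreover have "(d + r) / r = 1 + d / r"
    using r_pos by (simp add: field_simps)
  ultimately show ?thesis
    by (simp add: u_def d_def S_def)
qed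

lemma distortion_greedy_rate:
  assumes n: "2 \<le> n" and \<epsilon>: "0 < \<epsilon>" "\<epsilon> < 1/3"
    and S: "0 < (\<integral>x. h x powr (real DIM('a) / (real DIM('a) + r)) \<partial>lborel)"
  shows "distortion (a ` {1..n}) powr (1 / r)
    \<le> 2 * C0\<^sup>2 * r powr (1 / real DIM('a))
        / (real DIM('a) powr (1 / real DIM('a)) * M powr (1 / real DIM('a))
           * measure lborel (nball N 0 1) powr (1 / real DIM('a))
           * peakless_const N A (a 1) powr (1 / real DIM('a)))
      * phi_r r DIM('a) \<epsilon> powr (- 1 / real DIM('a))
      * ((\<integral>x. h x powr (real DIM('a) / (real DIM('a) + r)) \<partial>lborel)
           powr ((real DIM('a) + r) / real DIM('a))) powr (1 / r)
      * (real n - 1) powr (- 1 / real DIM('a))"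
proof -
  define d where "d = real DIM('a)"
  define S where "S = (\<integral>x. h x powr (real DIM('a) / (real DIM('a) + r)) \<partial>lborel)"
  define c where "c = gain_const \<epsilon> / S powr ((d + r) / r)"
  have d: "0 < d"
    by (simp add: d_def)
  have "distortion (a ` {1..n}) \<le> (d / r * c * (real n - 1)) powr (- 1 / (d / r))"
    using distortion_greedy_recursion[OF _ \<epsilon> S] gain_const_pos[OF \<epsilon>] S d r_pos distortion_nonneg
    by (intro recursion_decay[of c "d / r" "\<lambda>m. distortion (a ` {1..m})", OF _ _ _ _ n])
      (auto simp: c_def d_def S_def)
  then have "distortion (a ` {1..n}) powr (1 / r)
      \<le> ((d / r * c * (real n - 1)) powr (- 1 / (d / r))) powr (1 / r)"
    using distortion_nonneg r_pos by (intro powr_mono2) auto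
  also have "\<dots> = (d / r * c * (real n - 1)) powr (- 1 / d)"
    using r_pos d by (simp add: powr_powr)
  also have "\<dots> = 2 * C0\<^sup>2 * r powr (1 / d)
        / (d powr (1 / d) * M powr (1 / d) * measure lborel (nball N 0 1) powr (1 / d)
           * peakless_const N A (a 1) powr (1 / d))
      * phi_r r DIM('a) \<epsilon> powr (- 1 / d) * (S powr ((d + r) / d)) powr (1 / r) * (real n - 1) powr (- 1 / d)"
    unfolding c_def gain_const_def d_def
    by (rule greedy_rate_constant_eq)
      (use measure_nball_pos[OF norm_N] peakless phi_r_pos[OF r_pos \<epsilon>] M_pos S C0 r_pos n in
        \<open>auto simp: S_def\<close>)
  finally show ?thesis
    by (simp add: d_def S_def)
qed

lemma quant_err_greedy_le_phi:
  assumes n: "2 \<le> n" and \<epsilon>: "0 < \<epsilon>" "\<epsilon> < 1/3"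
  shows "quant_err N r P (a ` {1..n})
    \<le> 2 * C0\<^sup>2 * r powr (1 / real DIM('a))
        / (real DIM('a) powr (1 / real DIM('a)) * M powr (real DIM('a) + r)
           * measure lborel (nball N 0 1) powr (1 / real DIM('a))
           * peakless_const N A (a 1) powr (1 / real DIM('a)))
      * phi_r r DIM('a) \<epsilon> powr (- 1 / real DIM('a))
      * ((\<integral>x. h x powr (real DIM('a) / (real DIM('a) + r)) \<partial>lborel)
           powr ((real DIM('a) + r) / real DIM('a))) powr (1 / r)
      * (real n - 1) powr (- 1 / real DIM('a))"
proof -
  define d where "d = real DIM('a)"
  define S where "S = (\<integral>x. h x powr (real DIM('a) / (real DIM('a) + r)) \<partial>lborel)"
  define K where "K m = 2 * C0\<^sup>2 * r powr (1 / d) / (d powr (1 / d) * m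
    * measure lborel (nball N 0 1) powr (1 / d) * peakless_const N A (a 1) powr (1 / d))" for m
  have "0 \<le> S"
    unfolding S_def by (rule integral_nonneg_AE) simp
  then consider "S = 0" | "0 < S"
    by fastforce
  then show ?thesis
  proof cases
    case 1
    then have "distortion (a ` {1..n}) = 0"
      using distortion_greedy_le_decrement[of n "1/6"] distortion_nonneg n
      by (simp add: S_def order_antisym)
    then show ?thesis
      using 1 by (simp add: quant_err_eq_distortion S_def)
  next
    case 2
    have "1 \<le> d"
      by (simp add: d_def Suc_le_eq)
    then have "1 / d \<le> d + r"
      using r_pos by (smt (verit) divide_le_eq_1)
    then have "M powr (d + r) \<le> M powr (1 / d)"
      using M_pos M_le_1 by (intro powr_mono') auto
    \<comment> \<open>The argument yields M^(1/d) where the statement has the smaller M^(d+r).\<close>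
    then have "K (M powr (1 / d)) \<le> K (M powr (d + r))"
      unfolding K_def using measure_nball_pos[OF norm_N] peakless M_pos C0 r_pos \<open>1 \<le> d\<close>
      by (intro divide_left_mono mult_right_mono mult_left_mono mult_pos_pos) auto
    then show ?thesis
      using distortion_greedy_rate[OF n \<epsilon> 2[unfolded S_def]]
      unfolding quant_err_eq_distortion K_def d_def S_def
      by (elim order_trans) (intro mult_right_mono; simp)
  qed
qed

lemma quant_err_greedy_le:
  assumes "2 \<le> n"
  shows "quant_err N r P (a ` {1..n})
     \<le> (2 * C0\<^sup>2 * r powr (1 / real DIM('a))
          / (real DIM('a) powr (1 / real DIM('a)) * M powr (real DIM('a) + r)
             * measure lborel (nball N 0 1) powr (1 / real DIM('a))
             * peakless_const N A (a 1) powr (1 / real DIM('a)))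
        * (INF \<epsilon>\<in>{0<..<1/3}. phi_r r DIM('a) \<epsilon> powr (- 1 / real DIM('a))))
       * ((\<integral>x. h x powr (real DIM('a) / (real DIM('a) + r)) \<partial>lborel)
            powr ((real DIM('a) + r) / real DIM('a))) powr (1 / r)
       * (real n - 1) powr (- 1 / real DIM('a))"
    (is "?e \<le> ?K * ?I * ?T * ?m")
proof -
  have "?e \<le> ?K * ?T * ?m * ?I"
  proof (rule le_mult_INF)
    show "?e \<le> ?K * ?T * ?m * phi_r r DIM('a) \<epsilon> powr (- 1 / real DIM('a))"
      if "\<epsilon> \<in> {0<..<1/3}" for \<epsilon>
      using quant_err_greedy_le_phi[OF assms, of \<epsilon>] that by (simp only: ac_simps) simp
    show "0 \<le> ?K * ?T * ?m"
      using measure_nball_pos[OF norm_N] peakless M_pos by simp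
  qed simp_all
  then show ?thesis
    by (simp only: ac_simps)
qed

end

theorem theorem2p8:
  fixes N N0 :: "'a::euclidean_space \<Rightarrow> real"
    and h :: "'a \<Rightarrow> real" and a :: "nat \<Rightarrow> 'a" and A :: "'a set"
    and r M C0 :: real
  assumes r: "0 < r"
    and N: "is_norm N"
    and h_meas: "h \<in> borel_measurable lborel" and h_nonneg: "\<forall>x. 0 \<le> h x"
    and P_prob: "prob_space (density lborel (\<lambda>x. ennreal (h x)))"
    and h_Lp: "integrable lborel (\<lambda>x. h x powr (real DIM('a) / (real DIM('a) + r)))"
    and moment: "integrable (density lborel (\<lambda>x. ennreal (h x))) (\<lambda>x. N x powr r)"
    and greedy: "greedy_seq N r (density lborel (\<lambda>x. ennreal (h x))) a"
    and A_meas: "A \<in> sets lebesgue"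
    and supp: "msupp (density lborel (\<lambda>x. ennreal (h x))) \<subseteq> A"
    and a1A: "a 1 \<in> A"
    and star: "\<forall>x\<in>A. closed_segment (a 1) x \<subseteq> A"
    and peakless: "peakless_const N A (a 1) > 0"
    and radial: "almost_radial_noninc_with N0 M h A (a 1)"
    and C0: "1 \<le> C0"
    and equiv: "\<forall>x. N0 x / C0 \<le> N x \<and> N x \<le> C0 * N0 x"
  shows "\<forall>n\<ge>2. quant_err N r (density lborel (\<lambda>x. ennreal (h x))) (a ` {1..n})
     \<le> (2 * C0\<^sup>2 * r powr (1 / real DIM('a))
          / (real DIM('a) powr (1 / real DIM('a)) * M powr (real DIM('a) + r)
             * measure lborel (nball N 0 1) powr (1 / real DIM('a))
             * peakless_const N A (a 1) powr (1 / real DIM('a)))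
        * (INF \<epsilon>\<in>{0<..<1/3}. phi_r r DIM('a) \<epsilon> powr (- 1 / real DIM('a))))
       * ((\<integral>x. h x powr (real DIM('a) / (real DIM('a) + r)) \<partial>lborel)
            powr ((real DIM('a) + r) / real DIM('a))) powr (1 / r)
       * (real n - 1) powr (- 1 / real DIM('a))"
proof -
  interpret greedy_quantization N r h a A N0 M C0
    by (intro greedy_quantization.intro quantization_density.intro greedy_quantization_axioms.intro)
      (use assms in simp_all)
  show ?thesis
    by (intro allI impI quant_err_greedy_le)
qed

end
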